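(* Let $d\ge 7$ and let $G$ be a $d$-regular graph with girth $g(G)=5$. If there exists a vertex of $G$ that lies on no cycle of length $6$ in $G$, then $\chi_b(G)=d+1$.
   Context: The girth $g(G)$ is the length of a shortest cycle of $G$. A proper $k$-coloring $c:V(G)\to\{1,\dots,k\}$ is a b-coloring if every color class contains a vertex $v$ whose closed neighborhood $N[v]$ contains all $k$ colors. The b-chromatic number $\chi_b(G)$ is the largest $k$ such that $G$ admits a b-coloring with $k$ colors. *)

theory Defs
  imports Main "HOL-Library.Extended_Nat"
begin

definition simple_graph :: "'a set \<Rightarrow> ('a \<Rightarrow> 'a \<Rightarrow> bool) \<Rightarrow> bool" where
  "simple_graph V E \<longleftrightarrow> finite V \<and>
     (\<forall>u v. E u v \<longrightarrow> u \<in> V \<and> v \<in> V) \<and>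
     (\<forall>u v. E u v \<longrightarrow> E v u) \<and> (\<forall>v. \<not> E v v)"

definition neighbours :: "'a set \<Rightarrow> ('a \<Rightarrow> 'a \<Rightarrow> bool) \<Rightarrow> 'a \<Rightarrow> 'a set" where
  "neighbours V E v = {u \<in> V. E v u}"

definition closed_nbhd :: "'a set \<Rightarrow> ('a \<Rightarrow> 'a \<Rightarrow> bool) \<Rightarrow> 'a \<Rightarrow> 'a set" where
  "closed_nbhd V E v = insert v (neighbours V E v)"

definition regular :: "'a set \<Rightarrow> ('a \<Rightarrow> 'a \<Rightarrow> bool) \<Rightarrow> nat \<Rightarrow> bool" where
  "regular V E d \<longleftrightarrow> (\<forall>v\<in>V. card (neighbours V E v) = d)"

definition is_cycle :: "'a set \<Rightarrow> ('a \<Rightarrow> 'a \<Rightarrow> bool) \<Rightarrow> 'a list \<Rightarrow> bool" where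
  "is_cycle V E xs \<longleftrightarrow> length xs \<ge> 3 \<and> distinct xs \<and> set xs \<subseteq> V \<and>
     (\<forall>i < length xs. E (xs ! i) (xs ! ((i + 1) mod length xs)))"

definition has_cycle_of_length :: "'a set \<Rightarrow> ('a \<Rightarrow> 'a \<Rightarrow> bool) \<Rightarrow> nat \<Rightarrow> bool" where
  "has_cycle_of_length V E k \<longleftrightarrow> (\<exists>xs. is_cycle V E xs \<and> length xs = k)"

definition girth :: "'a set \<Rightarrow> ('a \<Rightarrow> 'a \<Rightarrow> bool) \<Rightarrow> enat" where
  "girth V E = (if \<exists>k. has_cycle_of_length V E k
                then enat (LEAST k. has_cycle_of_length V E k) else \<infinity>)"

definition on_cycle_of_length :: "'a set \<Rightarrow> ('a \<Rightarrow> 'a \<Rightarrow> bool) \<Rightarrow> nat \<Rightarrow> 'a \<Rightarrow> bool" where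
  "on_cycle_of_length V E k v \<longleftrightarrow> (\<exists>xs. is_cycle V E xs \<and> length xs = k \<and> v \<in> set xs)"

definition proper_coloring :: "'a set \<Rightarrow> ('a \<Rightarrow> 'a \<Rightarrow> bool) \<Rightarrow> nat \<Rightarrow> ('a \<Rightarrow> nat) \<Rightarrow> bool" where
  "proper_coloring V E k c \<longleftrightarrow> (\<forall>v\<in>V. c v \<in> {1..k}) \<and>
     (\<forall>u\<in>V. \<forall>v\<in>V. E u v \<longrightarrow> c u \<noteq> c v)"

definition b_coloring :: "'a set \<Rightarrow> ('a \<Rightarrow> 'a \<Rightarrow> bool) \<Rightarrow> nat \<Rightarrow> ('a \<Rightarrow> nat) \<Rightarrow> bool" where
  "b_coloring V E k c \<longleftrightarrow> proper_coloring V E k c \<and>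
     (\<forall>i\<in>{1..k}. \<exists>v\<in>V. c v = i \<and> c ` closed_nbhd V E v = {1..k})"

definition b_chromatic_number :: "'a set \<Rightarrow> ('a \<Rightarrow> 'a \<Rightarrow> bool) \<Rightarrow> nat" where
  "b_chromatic_number V E = Max {k. \<exists>c. b_coloring V E k c}"

end

theory Submission
  imports Defs
begin

text \<open>
  Every b-coloring of a d-regular graph has at most d + 1 colors, since a b-vertex sees all of
  them in its closed neighbourhood. For the lower bound fix a vertex v0 on no 6-cycle, let N be
  its neighbourhood and, for u in N, let A u be the neighbours of u other than v0. Color v0 with
  d + 1, N bijectively with 1..d, and each A u bijectively with the d - 1 colors other than that
  of u; then v0 and every u in N are b-vertices. Girth 5 makes the sets A u pairwise disjoint,
  independent and disjoint from N, and as v0 lies on no 6-cycle each vertex of A u has at most one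
  neighbour in the other sets A u'. Coloring the sets A u one after another, every new vertex
  therefore has at most one forbidden color, and counting shows that no color is forbidden on all
  of A u, which is enough to find an admissible bijection. Since the maximum degree is below
  d + 1, this partial coloring extends greedily to a proper coloring of the whole graph.
\<close>

lemma bij_betw_avoiding_forbidden:
  fixes forb :: "'a \<Rightarrow> 'b \<Rightarrow> bool"
  assumes "0 < card C" and "card A = card C"
    and "\<And>w x y. w \<in> A \<Longrightarrow> forb w x \<Longrightarrow> forb w y \<Longrightarrow> x = y"
    and "\<And>x. x \<in> C \<Longrightarrow> \<exists>w\<in>A. \<not> forb w x"
  shows "\<exists>\<sigma>. bij_betw \<sigma> A C \<and> (\<forall>w\<in>A. \<not> forb w (\<sigma> w))"
  using assms
proof (induction "card C" arbitrary: A C rule: nat_induct_non_zero)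
  case 1
  then obtain x a where "C = {x}" "A = {a}" by (metis card_1_singletonE)
  then show ?case using 1 by (intro exI[of _ "\<lambda>_. x"]) (auto simp: bij_betw_def)
next
  case (Suc n)
  then have "finite A" "finite C" by (metis card_ge_0_finite zero_less_Suc)+
  then obtain a where a: "a \<in> A" using Suc by fastforce
  define A' where "A' = A - {a}"
  have "card A' = n" using Suc \<open>finite A\<close> a unfolding A'_def by simp
  txt \<open>Give a the color that all of A' forbids, if there is one; otherwise any color allowed
    for a.\<close>
  obtain x where x: "x \<in> C" "\<not> forb a x" "\<And>z. z \<in> C - {x} \<Longrightarrow> \<exists>w\<in>A'. \<not> forb w z"
  proof (cases "\<exists>z\<in>C. \<forall>w\<in>A'. forb w z")
    case True
    then obtain z where z: "z \<in> C" "\<forall>w\<in>A'. forb w z" by blast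
    moreover have "\<not> forb a z" using Suc.prems(3) z unfolding A'_def by blast
    moreover have "A' \<noteq> {}" using \<open>card A' = n\<close> Suc.hyps(1) by auto
    ultimately show ?thesis using that Suc.prems(2) unfolding A'_def by blast
  next
    case False
    have "\<not> card C \<le> Suc 0" using Suc.hyps(1,3) by linarith
    then obtain y1 y2 where "y1 \<in> C" "y2 \<in> C" "y1 \<noteq> y2"
      using card_le_Suc0_iff_eq[OF \<open>finite C\<close>] by blast
    then obtain y where "y \<in> C" "\<not> forb a y" using Suc.prems(2) a by blast
    then show ?thesis using that False by blast
  qed
  have "\<exists>\<sigma>. bij_betw \<sigma> A' (C - {x}) \<and> (\<forall>w\<in>A'. \<not> forb w (\<sigma> w))"
    using Suc x a \<open>card A' = n\<close> \<open>finite C\<close> unfolding A'_def by (intro Suc.hyps(2)) auto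
  then obtain \<sigma> where \<sigma>: "bij_betw \<sigma> A' (C - {x})" "\<forall>w\<in>A'. \<not> forb w (\<sigma> w)" by blast
  have "bij_betw (\<sigma>(a := x)) A' (C - {x})"
    using \<sigma>(1) by (rule bij_betw_cong[THEN iffD1, rotated]) (simp add: A'_def)
  then have "bij_betw (\<sigma>(a := x)) (A' \<union> {a}) (C - {x} \<union> {x})"
    using notIn_Un_bij_betw[of a A' "\<sigma>(a := x)" "C - {x}"] by (simp add: A'_def)
  moreover have "A' \<union> {a} = A" "C - {x} \<union> {x} = C" using a x unfolding A'_def by auto
  ultimately show ?case using \<sigma>(2) x(2) unfolding A'_def by (intro exI[of _ "\<sigma>(a := x)"]) auto
qed

lemma proper_coloring_insert:
  assumes "simple_graph V E" and "x \<in> V" and "card (neighbours V E x) < k"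
    and "proper_coloring S E k c"
  shows "\<exists>i\<in>{1..k}. proper_coloring (insert x S) E k (c(x := i))"
proof -
  have "finite (neighbours V E x)"
    using assms(1) unfolding simple_graph_def neighbours_def by auto
  then have "card (c ` neighbours V E x) < card {1..k}"
    using assms(3) card_image_le le_less_trans by fastforce
  then have "\<not> {1..k} \<subseteq> c ` neighbours V E x"
    using card_mono[OF finite_imageI] \<open>finite (neighbours V E x)\<close> by fastforce
  then obtain i where i: "i \<in> {1..k}" "i \<notin> c ` neighbours V E x" by blast
  have "\<And>y. E x y \<Longrightarrow> c y \<noteq> i" "\<And>y. E y x \<Longrightarrow> c y \<noteq> i" "\<not> E x x"
    using i(2) assms(1) unfolding simple_graph_def neighbours_def by blast+
  then have "proper_coloring (insert x S) E k (c(x := i))"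
    using assms(4) i(1) unfolding proper_coloring_def by auto
  with i(1) show ?thesis by blast
qed

lemma proper_coloring_extend:
  assumes "simple_graph V E" and "\<forall>x\<in>V. card (neighbours V E x) < k"
    and "S \<subseteq> V" and "proper_coloring S E k c"
  shows "\<exists>c'. proper_coloring V E k c' \<and> (\<forall>x\<in>S. c' x = c x)"
proof -
  have "\<exists>c'. proper_coloring (S \<union> T) E k c' \<and> (\<forall>x\<in>S. c' x = c x)"
    if "finite T" "T \<subseteq> V - S" for T
    using that
  proof (induction rule: finite_subset_induct)
    case empty
    then show ?case using assms(4) by auto
  next
    case (insert x T)
    then obtain c' where c': "proper_coloring (S \<union> T) E k c'" "\<forall>x\<in>S. c' x = c x" by blast
    then obtain i where "proper_coloring (insert x (S \<union> T)) E k (c'(x := i))"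
      using proper_coloring_insert[OF assms(1) _ _ c'(1)] insert.hyps(2) assms(2) by blast
    then have "proper_coloring (S \<union> insert x T) E k (c'(x := i))" by (simp only: Un_insert_right)
    moreover have "\<forall>y\<in>S. (c'(x := i)) y = c y" using c'(2) insert.hyps(2) by auto
    ultimately show ?case by blast
  qed
  moreover have "finite (V - S)" using assms(1) unfolding simple_graph_def by blast
  moreover have "S \<union> (V - S) = V" using assms(3) by blast
  ultimately show ?thesis by (metis order_refl)
qed

lemma proper_coloring_cong:
  "(\<And>x. x \<in> S \<Longrightarrow> c x = c' x) \<Longrightarrow> proper_coloring S E k c \<longleftrightarrow> proper_coloring S E k c'"
  unfolding proper_coloring_def by simp

lemma proper_coloring_mono: "k \<le> k' \<Longrightarrow> proper_coloring S E k c \<Longrightarrow> proper_coloring S E k' c"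
  unfolding proper_coloring_def by auto

lemma proper_coloring_Un:
  assumes "proper_coloring S E k c" and "proper_coloring T E k c"
    and "\<And>x y. x \<in> S \<Longrightarrow> y \<in> T \<Longrightarrow> E x y \<or> E y x \<Longrightarrow> c x \<noteq> c y"
  shows "proper_coloring (S \<union> T) E k c"
  using assms unfolding proper_coloring_def by (metis Un_iff)

lemma b_coloring_regular_le:
  assumes "simple_graph V E" and "regular V E d" and "b_coloring V E k c"
  shows "k \<le> d + 1"
proof (cases "k = 0")
  case False
  then obtain v where v: "v \<in> V" "c ` closed_nbhd V E v = {1..k}"
    using assms(3) unfolding b_coloring_def by fastforce
  have "finite (neighbours V E v)"
    using assms(1) unfolding simple_graph_def neighbours_def by auto
  then have "card (c ` closed_nbhd V E v) \<le> card (closed_nbhd V E v)"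
    unfolding closed_nbhd_def by (intro card_image_le) simp
  also have "\<dots> \<le> card (neighbours V E v) + 1"
    unfolding closed_nbhd_def using \<open>finite (neighbours V E v)\<close> by (simp add: card_insert_if)
  finally have "card (c ` closed_nbhd V E v) \<le> card (neighbours V E v) + 1" .
  then show ?thesis using v assms(2) unfolding regular_def by simp
qed simp

lemma b_chromatic_number_eqI:
  assumes "\<And>k c. b_coloring V E k c \<Longrightarrow> k \<le> m" and "b_coloring V E m c"
  shows "b_chromatic_number V E = m"
  unfolding b_chromatic_number_def
proof (rule Max_eqI)
  have "{k. \<exists>c. b_coloring V E k c} \<subseteq> {..m}" using assms(1) by blast
  then show "finite {k. \<exists>c. b_coloring V E k c}" by (rule finite_subset) simp
  show "\<And>k. k \<in> {k. \<exists>c. b_coloring V E k c} \<Longrightarrow> k \<le> m" using assms(1) by blast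
  show "m \<in> {k. \<exists>c. b_coloring V E k c}" using assms(2) by blast
qed

lemma no_cycle_shorter_than_girth:
  assumes "girth V E = enat g" and "k < g"
  shows "\<not> has_cycle_of_length V E k"
proof
  assume "has_cycle_of_length V E k"
  then have "(LEAST k. has_cycle_of_length V E k) \<le> k" by (rule Least_le)
  moreover have "girth V E = enat (LEAST k. has_cycle_of_length V E k)"
    using \<open>has_cycle_of_length V E k\<close> unfolding girth_def by auto
  ultimately show False using assms by simp
qed

lemma successively_nth:
  assumes "successively R xs" and "Suc i < length xs"
  shows "R (xs ! i) (xs ! Suc i)"
  using assms
proof (induction xs arbitrary: i rule: induct_list012)
  case (3 x y zs)
  then show ?case by (cases i) auto
qed auto

lemma is_cycleI:
  assumes "3 \<le> length xs" "distinct xs" "set xs \<subseteq> V"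
    and "successively E xs" and "E (last xs) (hd xs)"
  shows "is_cycle V E xs"
  unfolding is_cycle_def
proof (intro conjI allI impI assms(1-3))
  fix i assume i: "i < length xs"
  show "E (xs ! i) (xs ! ((i + 1) mod length xs))"
  proof (cases "Suc i < length xs")
    case True
    then show ?thesis using successively_nth[OF assms(4)] by simp
  next
    case False
    then have "i = length xs - 1" "i + 1 = length xs" using i by auto
    moreover have "xs \<noteq> []" using assms(1) by auto
    ultimately show ?thesis using assms(5) by (simp add: last_conv_nth hd_conv_nth)
  qed
qed

locale rooted_girth_five =
  fixes V :: "'a set" and E :: "'a \<Rightarrow> 'a \<Rightarrow> bool" and d :: nat and v0 :: 'a
  assumes simple: "simple_graph V E" and regular: "regular V E d" and two_le_d: "2 \<le> d"
    and no_triangle: "\<not> has_cycle_of_length V E 3"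
    and no_square: "\<not> has_cycle_of_length V E 4"
    and root_in_V: "v0 \<in> V" and root_off_hexagons: "\<not> on_cycle_of_length V E 6 v0"
begin

lemma edge_sym: "E a b \<Longrightarrow> E b a"
  and edge_irrefl: "\<not> E a a"
  and edge_in_V: "E a b \<Longrightarrow> a \<in> V" "E a b \<Longrightarrow> b \<in> V"
  and finite_V: "finite V"
  using simple unfolding simple_graph_def by blast+

lemma triangle_free: "E a b \<Longrightarrow> E b c \<Longrightarrow> E c a \<Longrightarrow> False"
proof -
  assume "E a b" "E b c" "E c a"
  then have "is_cycle V E [a, b, c]"
    by (intro is_cycleI) (auto intro: edge_in_V dest: edge_irrefl[THEN notE])
  then show False using no_triangle unfolding has_cycle_of_length_def by fastforce
qed

lemma square_free: "E a b \<Longrightarrow> E b c \<Longrightarrow> E c e \<Longrightarrow> E e a \<Longrightarrow> a \<noteq> c \<Longrightarrow> b \<noteq> e \<Longrightarrow> False"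
proof -
  assume "E a b" "E b c" "E c e" "E e a" "a \<noteq> c" "b \<noteq> e"
  then have "is_cycle V E [a, b, c, e]"
    by (intro is_cycleI) (auto intro: edge_in_V dest: edge_irrefl[THEN notE])
  then show False using no_square unfolding has_cycle_of_length_def by fastforce
qed

lemma no_hexagon_through_root:
  "E v0 a \<Longrightarrow> E a b \<Longrightarrow> E b c \<Longrightarrow> E c e \<Longrightarrow> E e f \<Longrightarrow> E f v0 \<Longrightarrow>
   distinct [v0, a, b, c, e, f] \<Longrightarrow> False"
proof -
  assume "E v0 a" "E a b" "E b c" "E c e" "E e f" "E f v0" "distinct [v0, a, b, c, e, f]"
  then have "is_cycle V E [v0, a, b, c, e, f]"
    by (intro is_cycleI) (auto intro: edge_in_V)
  then show False using root_off_hexagons unfolding on_cycle_of_length_def by fastforce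
qed

definition N :: "'a set" where
  "N = neighbours V E v0"

definition A :: "'a \<Rightarrow> 'a set" where
  "A u = neighbours V E u - {v0}"

lemma mem_N: "u \<in> N \<longleftrightarrow> E v0 u"
  unfolding N_def neighbours_def using edge_in_V by auto

lemma mem_A: "w \<in> A u \<longleftrightarrow> E u w \<and> w \<noteq> v0"
  unfolding A_def neighbours_def using edge_in_V by auto

lemma finite_N: "finite N" and N_subset: "N \<subseteq> V" and card_N: "card N = d"
  using finite_V regular root_in_V unfolding N_def neighbours_def regular_def by auto

lemma root_notin_N: "v0 \<notin> N"
  using edge_irrefl mem_N by blast

lemma A_subset: "A u \<subseteq> V"
  unfolding A_def neighbours_def by auto

lemma neighbours_of_N: "u \<in> N \<Longrightarrow> neighbours V E u = insert v0 (A u)"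
  using edge_sym root_in_V unfolding mem_N A_def neighbours_def by auto

lemma card_A: "u \<in> N \<Longrightarrow> card (A u) = d - 1"
  using regular finite_V N_subset neighbours_of_N[of u] root_in_V A_subset
  unfolding regular_def
  by (metis A_def Diff_iff card_insert_disjoint finite_subset insertI1 diff_Suc_1 subsetD)

lemma A_disjoint_N: "u \<in> N \<Longrightarrow> w \<in> A u \<Longrightarrow> w \<notin> N"
  using triangle_free edge_sym unfolding mem_N mem_A by blast

lemma A_disjoint: "u \<in> N \<Longrightarrow> u' \<in> N \<Longrightarrow> u \<noteq> u' \<Longrightarrow> w \<in> A u \<Longrightarrow> w \<notin> A u'"
  using square_free edge_sym unfolding mem_N mem_A by metis

lemma A_independent: "w \<in> A u \<Longrightarrow> w' \<in> A u \<Longrightarrow> \<not> E w w'"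
  using triangle_free edge_sym unfolding mem_A by metis

text \<open>Two neighbours of w \<in> A u in other parts of the second layer would close a 4-cycle
  (same part) or a 6-cycle through v0 (different parts).\<close>

lemma A_neighbour_unique:
  assumes "u \<in> N" "u1 \<in> N" "u2 \<in> N" "w \<in> A u" "w1 \<in> A u1" "w2 \<in> A u2" "E w w1" "E w w2"
  shows "w1 = w2"
proof (rule ccontr)
  assume "w1 \<noteq> w2"
  have edges: "E v0 u1" "E v0 u2" "E u1 w1" "E u2 w2"
    and ne_root: "w \<noteq> v0" "w1 \<noteq> v0" "w2 \<noteq> v0"
    using assms unfolding mem_A mem_N by auto
  have "w \<notin> N" "w1 \<notin> N" "w2 \<notin> N" using A_disjoint_N assms by blast+
  show False
  proof (cases "u1 = u2")
    case True
    then show False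
      using square_free[of w w1 u1 w2] edges assms(7,8) \<open>w1 \<noteq> w2\<close> \<open>w \<notin> N\<close> assms(2) edge_sym
      by metis
  next
    case False
    have "w \<noteq> w1" "w \<noteq> w2" using assms(7,8) edge_irrefl by blast+
    then have "distinct [v0, u1, w1, w, w2, u2]"
      using False \<open>w1 \<noteq> w2\<close> edges ne_root \<open>w \<notin> N\<close> \<open>w1 \<notin> N\<close> \<open>w2 \<notin> N\<close> assms(2,3)
        edge_irrefl by auto
    then show False
      using no_hexagon_through_root[of u1 w1 w w2 u2] edges assms(7,8) edge_sym by blast
  qed
qed

definition second_layer_coloring :: "('a \<Rightarrow> nat) \<Rightarrow> 'a set \<Rightarrow> ('a \<Rightarrow> nat) \<Rightarrow> bool" where
  "second_layer_coloring f U c \<longleftrightarrow>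
     (\<forall>u\<in>U. bij_betw c (A u) ({1..d} - {f u})) \<and> proper_coloring (\<Union> (A ` U)) E d c"

lemma color_not_forbidden_everywhere:
  assumes f: "bij_betw f N {1..d}" and U: "U \<subseteq> N" and u: "u \<in> N" "u \<notin> U"
    and c: "\<forall>u'\<in>U. bij_betw c (A u') ({1..d} - {f u'})"
    and i: "i \<in> {1..d} - {f u}"
  shows "\<exists>w\<in>A u. \<forall>w'\<in>\<Union> (A ` U). E w w' \<longrightarrow> c w' \<noteq> i"
proof (rule ccontr)
  assume "\<not> ?thesis"
  then have "\<forall>w\<in>A u. \<exists>u'\<in>U. \<exists>w'\<in>A u'. E w w' \<and> c w' = i" by blast
  then obtain g p where gp: "\<And>w. w \<in> A u \<Longrightarrow> g w \<in> U \<and> p w \<in> A (g w) \<and> E w (p w) \<and> c (p w) = i"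
    by metis
  txt \<open>The part of the second layer containing the i-colored neighbour determines w.\<close>
  have "inj_on (f \<circ> g) (A u)"
  proof (rule inj_onI)
    fix w1 w2 assume w: "w1 \<in> A u" "w2 \<in> A u" "(f \<circ> g) w1 = (f \<circ> g) w2"
    then have "g w1 = g w2"
      using f gp U unfolding bij_betw_def inj_on_def by (metis comp_apply subsetD)
    moreover have "inj_on c (A (g w1))" using c gp w(1) unfolding bij_betw_def by blast
    ultimately have "p w1 = p w2" using gp w(1,2) unfolding inj_on_def by metis
    moreover have "g w1 \<in> N" "p w1 \<in> A (g w1)" "E (p w1) w1" "E (p w2) w2"
      using gp w(1,2) U edge_sym by auto
    ultimately show "w1 = w2"
      using A_neighbour_unique[of "g w1" u u "p w1" w1 w2] w(1,2) u(1) by simp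
  qed
  have "(f \<circ> g) ` A u \<subseteq> {1..d} - {f u, i}"
  proof
    fix y assume "y \<in> (f \<circ> g) ` A u"
    then obtain w where w: "w \<in> A u" "y = f (g w)" by auto
    have "g w \<in> N" "g w \<noteq> u" using gp[OF w(1)] U u(2) by auto
    then have "f (g w) \<in> {1..d} - {f u}"
      using f u(1) bij_betwE bij_betw_imp_inj_on[THEN inj_on_eq_iff] by fastforce
    moreover have "i \<in> {1..d} - {f (g w)}" using c gp[OF w(1)] bij_betwE by metis
    ultimately show "y \<in> {1..d} - {f u, i}" using w(2) by auto
  qed
  then have "card ((f \<circ> g) ` A u) \<le> card ({1..d} - {f u, i})"
    by (intro card_mono) auto
  also have "\<dots> = d - 2"
    using i bij_betwE[OF f] u(1) by (subst card_Diff_subset) auto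
  finally show False
    using card_image[OF \<open>inj_on (f \<circ> g) (A u)\<close>] card_A[OF u(1)] two_le_d by linarith
qed

lemma A_coloring_avoiding_exists:
  assumes f: "bij_betw f N {1..d}" and U: "U \<subseteq> N" and u: "u \<in> N" "u \<notin> U"
    and c: "\<forall>u'\<in>U. bij_betw c (A u') ({1..d} - {f u'})"
  shows "\<exists>\<sigma>. bij_betw \<sigma> (A u) ({1..d} - {f u}) \<and>
    (\<forall>w\<in>A u. \<forall>w'\<in>\<Union> (A ` U). E w w' \<longrightarrow> c w' \<noteq> \<sigma> w)"
proof -
  define forb where "forb w j \<longleftrightarrow> (\<exists>w'\<in>\<Union> (A ` U). E w w' \<and> c w' = j)" for w j
  have "f u \<in> {1..d}" using bij_betwE[OF f] u(1) by blast
  have "\<exists>\<sigma>. bij_betw \<sigma> (A u) ({1..d} - {f u}) \<and> (\<forall>w\<in>A u. \<not> forb w (\<sigma> w))"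
  proof (rule bij_betw_avoiding_forbidden)
    show "0 < card ({1..d} - {f u})" "card (A u) = card ({1..d} - {f u})"
      using \<open>f u \<in> {1..d}\<close> two_le_d card_A[OF u(1)] by auto
    show "j = j'" if w: "w \<in> A u" and forb: "forb w j" "forb w j'" for w j j'
    proof -
      obtain u1 w1 u2 w2 where "u1 \<in> U" "w1 \<in> A u1" "E w w1" "c w1 = j"
        and "u2 \<in> U" "w2 \<in> A u2" "E w w2" "c w2 = j'"
        using forb unfolding forb_def by blast
      moreover have "u1 \<in> N" "u2 \<in> N" using \<open>u1 \<in> U\<close> \<open>u2 \<in> U\<close> U by auto
      ultimately have "w1 = w2" using A_neighbour_unique[of u u1 u2 w w1 w2] w u(1) by blast
      then show "j = j'" using \<open>c w1 = j\<close> \<open>c w2 = j'\<close> by simp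
    qed
    show "\<exists>w\<in>A u. \<not> forb w j" if j: "j \<in> {1..d} - {f u}" for j
    proof -
      obtain w where "w \<in> A u" "\<forall>w'\<in>\<Union> (A ` U). E w w' \<longrightarrow> c w' \<noteq> j"
        using color_not_forbidden_everywhere[OF f U u c j] by blast
      then show ?thesis unfolding forb_def by blast
    qed
  qed
  then show ?thesis unfolding forb_def by blast
qed

lemma second_layer_coloring_insert:
  assumes f: "bij_betw f N {1..d}" and U: "U \<subseteq> N" and u: "u \<in> N" "u \<notin> U"
    and c: "second_layer_coloring f U c"
  shows "\<exists>c'. second_layer_coloring f (insert u U) c'"
proof -
  have c_bij: "\<forall>u'\<in>U. bij_betw c (A u') ({1..d} - {f u'})"
    and c_proper: "proper_coloring (\<Union> (A ` U)) E d c"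
    using c unfolding second_layer_coloring_def by blast+
  obtain \<sigma> where \<sigma>: "bij_betw \<sigma> (A u) ({1..d} - {f u})"
    and avoids: "\<And>w w'. w \<in> A u \<Longrightarrow> w' \<in> \<Union> (A ` U) \<Longrightarrow> E w w' \<Longrightarrow> c w' \<noteq> \<sigma> w"
    using A_coloring_avoiding_exists[OF f U u c_bij] by blast
  define c' where "c' x = (if x \<in> A u then \<sigma> x else c x)" for x
  have c'_new: "c' w = \<sigma> w" if "w \<in> A u" for w
    using that unfolding c'_def by simp
  have c'_old: "c' w = c w" if w: "w \<in> \<Union> (A ` U)" for w
  proof -
    obtain u' where "u' \<in> U" "w \<in> A u'" using w by blast
    then have "w \<notin> A u" using A_disjoint[of u' u w] U u by blast
    then show ?thesis unfolding c'_def by simp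
  qed
  have "bij_betw c' (A u') ({1..d} - {f u'})" if "u' \<in> insert u U" for u'
  proof (cases "u' = u")
    case True
    then show ?thesis using \<sigma> bij_betw_cong[of "A u" c' \<sigma>] c'_new by simp
  next
    case False
    then have "u' \<in> U" using that by blast
    moreover have "\<forall>w\<in>A u'. c' w = c w" using \<open>u' \<in> U\<close> c'_old by blast
    ultimately show ?thesis using c_bij bij_betw_cong[of "A u'" c' c] by simp
  qed
  moreover have "proper_coloring (A u \<union> \<Union> (A ` U)) E d c'"
  proof (rule proper_coloring_Un)
    show "proper_coloring (A u) E d c'"
      using bij_betwE[OF \<sigma>] c'_new A_independent unfolding proper_coloring_def by auto
    show "proper_coloring (\<Union> (A ` U)) E d c'"
      using c_proper proper_coloring_cong[of "\<Union> (A ` U)" c' c] c'_old by simp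
    show "c' x \<noteq> c' y" if "x \<in> A u" "y \<in> \<Union> (A ` U)" "E x y \<or> E y x" for x y
      using avoids[OF that(1,2)] c'_new[OF that(1)] c'_old[OF that(2)] that(3) edge_sym by metis
  qed
  ultimately show ?thesis unfolding second_layer_coloring_def by auto
qed

lemma second_layer_coloring_exists:
  assumes f: "bij_betw f N {1..d}"
  shows "\<exists>c. second_layer_coloring f N c"
proof -
  have "\<exists>c. second_layer_coloring f U c" if "U \<subseteq> N" for U
    using finite_subset[OF that finite_N] that
  proof (induction rule: finite_subset_induct')
    case empty
    then show ?case unfolding second_layer_coloring_def proper_coloring_def by simp
  next
    case (insert u U)
    then show ?case using second_layer_coloring_insert[OF f] by blast
  qed
  then show ?thesis by blast
qed

definition ball :: "'a set" where
  "ball = insert v0 (N \<union> \<Union> (A ` N))"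

definition ball_coloring :: "('a \<Rightarrow> nat) \<Rightarrow> ('a \<Rightarrow> nat) \<Rightarrow> 'a \<Rightarrow> nat" where
  "ball_coloring f c x = (if x = v0 then d + 1 else if x \<in> N then f x else c x)"

lemma ball_subset: "ball \<subseteq> V"
  unfolding ball_def using root_in_V N_subset A_subset by blast

lemma star_coloring_proper:
  assumes f: "bij_betw f N {1..d}"
  shows "proper_coloring (insert v0 N) E (d + 1) (ball_coloring f c)"
  unfolding proper_coloring_def
proof (intro conjI ballI impI)
  have f_range: "f u \<in> {1..d}" if "u \<in> N" for u
    using bij_betwE[OF f] that by blast
  fix x assume x: "x \<in> insert v0 N"
  then show "ball_coloring f c x \<in> {1..d + 1}"
    using f_range[of x] unfolding ball_coloring_def by auto
  fix y assume y: "y \<in> insert v0 N" and "E x y"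
  then have "x = v0 \<or> y = v0"
    using x triangle_free[of v0 x y] edge_sym[of v0 y] by (auto simp: mem_N)
  moreover have "x \<noteq> y" using \<open>E x y\<close> edge_irrefl by blast
  ultimately show "ball_coloring f c x \<noteq> ball_coloring f c y"
    using x y f_range[of x] f_range[of y] root_notin_N unfolding ball_coloring_def by auto
qed

lemma ball_coloring_proper:
  assumes f: "bij_betw f N {1..d}" and c: "second_layer_coloring f N c"
  shows "proper_coloring ball E (d + 1) (ball_coloring f c)"
proof -
  have c_bij: "\<And>u. u \<in> N \<Longrightarrow> bij_betw c (A u) ({1..d} - {f u})"
    and c_proper: "proper_coloring (\<Union> (A ` N)) E d c"
    using c unfolding second_layer_coloring_def by blast+
  have layer2: "x \<noteq> v0" "x \<notin> N" if "x \<in> \<Union> (A ` N)" for x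
  proof -
    from that obtain u where "u \<in> N" "x \<in> A u" by blast
    then show "x \<noteq> v0" "x \<notin> N" using A_disjoint_N mem_A by blast+
  qed
  have "ball = insert v0 N \<union> \<Union> (A ` N)" unfolding ball_def by blast
  moreover have "proper_coloring (insert v0 N \<union> \<Union> (A ` N)) E (d + 1) (ball_coloring f c)"
  proof (rule proper_coloring_Un)
    show "proper_coloring (insert v0 N) E (d + 1) (ball_coloring f c)"
      using f by (rule star_coloring_proper)
    have "ball_coloring f c x = c x" if "x \<in> \<Union> (A ` N)" for x
      using layer2[OF that] unfolding ball_coloring_def by simp
    moreover have "proper_coloring (\<Union> (A ` N)) E (d + 1) c"
      using c_proper by (rule proper_coloring_mono[rotated]) simp
    ultimately show "proper_coloring (\<Union> (A ` N)) E (d + 1) (ball_coloring f c)"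
      by (rule proper_coloring_cong[THEN iffD2])
    show "ball_coloring f c x \<noteq> ball_coloring f c y"
      if x: "x \<in> insert v0 N" and y: "y \<in> \<Union> (A ` N)" and "E x y \<or> E y x" for x y
    proof -
      have "E x y" using \<open>E x y \<or> E y x\<close> edge_sym[of y x] by blast
      then have "x \<in> N" using x layer2[OF y] mem_N by blast
      then have "y \<in> A x" using \<open>E x y\<close> layer2[OF y] mem_A by blast
      then have "c y \<noteq> f x" using bij_betwE[OF c_bij[OF \<open>x \<in> N\<close>]] by blast
      then show ?thesis using \<open>x \<in> N\<close> layer2[OF y] root_notin_N unfolding ball_coloring_def by auto
    qed
  qed
  ultimately show ?thesis by simp
qed

lemma b_coloring_extending_ball_coloring:
  assumes f: "bij_betw f N {1..d}" and c: "second_layer_coloring f N c"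
    and c': "proper_coloring V E (d + 1) c'" and agree: "\<forall>x\<in>ball. c' x = ball_coloring f c x"
  shows "b_coloring V E (d + 1) c'"
  unfolding b_coloring_def
proof (intro conjI c' ballI)
  have f_onto: "f ` N = {1..d}" using f by (rule bij_betw_imp_surj_on)
  have interval: "{1..d + 1} = insert (d + 1) {1..d}" by auto
  have c'_root: "c' v0 = d + 1"
    using agree unfolding ball_def ball_coloring_def by simp
  have c'_N: "c' u = f u" if u: "u \<in> N" for u
    using agree u root_notin_N unfolding ball_def ball_coloring_def by (metis UnI1 insertI2)
  have c'_A: "c' ` A u = {1..d} - {f u}" if u: "u \<in> N" for u
  proof -
    have "c' w = c w" if w: "w \<in> A u" for w
    proof -
      have "w \<noteq> v0" "w \<notin> N" using A_disjoint_N[OF u w] w mem_A by auto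
      moreover have "w \<in> ball" using u w unfolding ball_def by blast
      ultimately show ?thesis using agree unfolding ball_coloring_def by simp
    qed
    then have "c' ` A u = c ` A u" by (rule image_cong[OF refl])
    also have "\<dots> = {1..d} - {f u}"
      using c u unfolding second_layer_coloring_def by (metis bij_betw_imp_surj_on)
    finally show ?thesis .
  qed
  fix i assume i: "i \<in> {1..d + 1}"
  show "\<exists>v\<in>V. c' v = i \<and> c' ` closed_nbhd V E v = {1..d + 1}"
  proof (cases "i = d + 1")
    case True
    have "c' ` closed_nbhd V E v0 = insert (d + 1) (c' ` N)"
      unfolding closed_nbhd_def N_def[symmetric] using c'_root by simp
    also have "c' ` N = f ` N" using c'_N by (rule image_cong[OF refl])
    finally show ?thesis using True root_in_V c'_root f_onto interval by auto
  next
    case False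
    then have "i \<in> f ` N" using i f_onto by auto
    then obtain u where u: "u \<in> N" "f u = i" by blast
    have "c' ` closed_nbhd V E u = insert i (insert (d + 1) ({1..d} - {i}))"
      unfolding closed_nbhd_def neighbours_of_N[OF u(1)] using c'_N c'_root c'_A u by simp
    also have "\<dots> = {1..d + 1}" using u f_onto interval by auto
    finally show ?thesis using u c'_N N_subset by (intro bexI[of _ u]) auto
  qed
qed

lemma exists_b_coloring: "\<exists>c. b_coloring V E (d + 1) c"
proof -
  obtain f where f: "bij_betw f N {1..d}"
    using finite_same_card_bij[OF finite_N, of "{1..d}"] card_N by auto
  obtain c where c: "second_layer_coloring f N c"
    using second_layer_coloring_exists[OF f] by blast
  have "\<forall>x\<in>V. card (neighbours V E x) < d + 1" using regular unfolding regular_def by simp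
  then obtain c' where "proper_coloring V E (d + 1) c'" "\<forall>x\<in>ball. c' x = ball_coloring f c x"
    using proper_coloring_extend[OF simple _ ball_subset ball_coloring_proper[OF f c]] by blast
  then show ?thesis using b_coloring_extending_ball_coloring[OF f c] by blast
qed

end

theorem mainTheorem3:
  fixes V :: "'a set" and E :: "'a \<Rightarrow> 'a \<Rightarrow> bool" and d :: nat
  assumes "simple_graph V E"
    and "d \<ge> 7"
    and "regular V E d"
    and "girth V E = 5"
    and "\<exists>v\<in>V. \<not> on_cycle_of_length V E 6 v"
  shows "b_chromatic_number V E = d + 1"
proof -
  obtain v0 where v0: "v0 \<in> V" "\<not> on_cycle_of_length V E 6 v0" using assms(5) by blast
  have "girth V E = enat 5" using assms(4) by (simp add: numeral_eq_enat)
  then have "\<not> has_cycle_of_length V E 3" "\<not> has_cycle_of_length V E 4"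
    using no_cycle_shorter_than_girth[of V E 5] by simp_all
  txt \<open>Of d \<ge> 7 the construction only needs d \<ge> 2.\<close>
  with assms(1-3) v0 interpret rooted_girth_five V E d v0 by unfold_locales auto
  obtain c where "b_coloring V E (d + 1) c" using exists_b_coloring by blast
  with b_coloring_regular_le[OF assms(1,3)] show ?thesis by (rule b_chromatic_number_eqI)
qed

end
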